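(* Let $\mathcal{C}=(\mathcal{T},\mathcal{I},\mathcal{R})$ be an extraction context with thresholds \textit{minsupp} and \textit{minbond}. Then $\mathcal{M}in\mathcal{MM}ax\mathcal{CR}=\mathcal{M}ax\mathcal{CRCP}\cup\mathcal{M}in\mathcal{MRCP}$, with each element $J$ recorded together with $\mathit{Supp}(\wedge J)$ and $\mathit{bond}(J)$, is an approximate concise representation of the set $\mathcal{RCP}$ of rare correlated patterns; that is, for every pattern $I\subseteq\mathcal{I}$, the recorded data alone suffice to decide whether $I\in\mathcal{RCP}$.
   Context: An extraction context is a triple $\mathcal{C}=(\mathcal{T},\mathcal{I},\mathcal{R})$ with $\mathcal{T}$ a finite set of transactions, $\mathcal{I}$ a finite set of items and $\mathcal{R}\subseteq\mathcal{T}\times\mathcal{I}$. For a pattern $I\subseteq\mathcal{I}$: $\mathit{Supp}(\wedge I)=|\{t:\forall i\in I,(t,i)\in\mathcal{R}\}|$, $\mathit{Supp}(\vee I)=|\{t:\exists i\in I,(t,i)\in\mathcal{R}\}|$, and for nonempty $I$, $\mathit{bond}(I)=\mathit{Supp}(\wedge I)/\mathit{Supp}(\vee I)$ (with $\mathit{bond}(\emptyset)=+\infty$ by convention). $\mathcal{CP}=\{I:\mathit{bond}(I)\ge\textit{minbond}\}$; $\mathcal{RCP}=\{I\in\mathcal{CP}:\mathit{Supp}(\wedge I)<\textit{minsupp}\}$. $\mathcal{CRCP}=\{I\in\mathcal{RCP}:\forall I_1\supsetneq I,\ \mathit{bond}(I)>\mathit{bond}(I_1)\}$; $\mathcal{MRCP}=\{I\in\mathcal{RCP}:\forall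 I_1\subsetneq I,\ \mathit{bond}(I)<\mathit{bond}(I_1)\}$. $\mathcal{M}ax\mathcal{CP}=\{I\in\mathcal{CP}:\forall I_1\supsetneq I,\ \mathit{bond}(I_1)<\textit{minbond}\}$ and $\mathcal{M}ax\mathcal{CRCP}=\mathcal{CRCP}\cap\mathcal{M}ax\mathcal{CP}$. $\mathcal{M}in\mathcal{RP}$ is the set of patterns $I$ with $\mathit{Supp}(\wedge I)<\textit{minsupp}$ whose proper subsets all have conjunctive support $\ge\textit{minsupp}$, and $\mathcal{M}in\mathcal{MRCP}=\mathcal{MRCP}\cap\mathcal{M}in\mathcal{RP}$. *)

theory Defs
  imports Complex_Main "HOL-Library.Extended_Real"
begin

definition extraction_context :: "'t set \<Rightarrow> 'i set \<Rightarrow> ('t \<times> 'i) set \<Rightarrow> bool" where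
  "extraction_context T Its R \<longleftrightarrow> finite T \<and> finite Its \<and> R \<subseteq> T \<times> Its"

definition supp_conj :: "'t set \<Rightarrow> ('t \<times> 'i) set \<Rightarrow> 'i set \<Rightarrow> nat" where
  "supp_conj T R I = card {t \<in> T. \<forall>i\<in>I. (t, i) \<in> R}"

definition supp_disj :: "'t set \<Rightarrow> ('t \<times> 'i) set \<Rightarrow> 'i set \<Rightarrow> nat" where
  "supp_disj T R I = card {t \<in> T. \<exists>i\<in>I. (t, i) \<in> R}"

text \<open>bond(empty) = +infinity; otherwise the ratio (with the HOL convention x/0 = 0).\<close>
definition bond :: "'t set \<Rightarrow> ('t \<times> 'i) set \<Rightarrow> 'i set \<Rightarrow> ereal" where
  "bond T R I = (if I = {} then \<infinity>
     else ereal (real (supp_conj T R I) / real (supp_disj T R I)))"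

definition CP :: "'t set \<Rightarrow> 'i set \<Rightarrow> ('t \<times> 'i) set \<Rightarrow> real \<Rightarrow> 'i set set" where
  "CP T Its R minbond = {I. I \<subseteq> Its \<and> bond T R I \<ge> ereal minbond}"

definition RCP :: "'t set \<Rightarrow> 'i set \<Rightarrow> ('t \<times> 'i) set \<Rightarrow> nat \<Rightarrow> real \<Rightarrow> 'i set set" where
  "RCP T Its R minsupp minbond = {I \<in> CP T Its R minbond. supp_conj T R I < minsupp}"

definition CRCP :: "'t set \<Rightarrow> 'i set \<Rightarrow> ('t \<times> 'i) set \<Rightarrow> nat \<Rightarrow> real \<Rightarrow> 'i set set" where
  "CRCP T Its R minsupp minbond = {I \<in> RCP T Its R minsupp minbond.
     \<forall>I1. I \<subset> I1 \<and> I1 \<subseteq> Its \<longrightarrow> bond T R I > bond T R I1}"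

definition MRCP :: "'t set \<Rightarrow> 'i set \<Rightarrow> ('t \<times> 'i) set \<Rightarrow> nat \<Rightarrow> real \<Rightarrow> 'i set set" where
  "MRCP T Its R minsupp minbond = {I \<in> RCP T Its R minsupp minbond.
     \<forall>I1. I1 \<subset> I \<longrightarrow> bond T R I < bond T R I1}"

definition MaxCP :: "'t set \<Rightarrow> 'i set \<Rightarrow> ('t \<times> 'i) set \<Rightarrow> real \<Rightarrow> 'i set set" where
  "MaxCP T Its R minbond = {I \<in> CP T Its R minbond.
     \<forall>I1. I \<subset> I1 \<and> I1 \<subseteq> Its \<longrightarrow> bond T R I1 < ereal minbond}"

definition MaxCRCP :: "'t set \<Rightarrow> 'i set \<Rightarrow> ('t \<times> 'i) set \<Rightarrow> nat \<Rightarrow> real \<Rightarrow> 'i set set" where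
  "MaxCRCP T Its R minsupp minbond = CRCP T Its R minsupp minbond \<inter> MaxCP T Its R minbond"

definition MinRP :: "'t set \<Rightarrow> 'i set \<Rightarrow> ('t \<times> 'i) set \<Rightarrow> nat \<Rightarrow> 'i set set" where
  "MinRP T Its R minsupp = {I. I \<subseteq> Its \<and> supp_conj T R I < minsupp \<and>
     (\<forall>I1. I1 \<subset> I \<longrightarrow> supp_conj T R I1 \<ge> minsupp)}"

definition MinMRCP :: "'t set \<Rightarrow> 'i set \<Rightarrow> ('t \<times> 'i) set \<Rightarrow> nat \<Rightarrow> real \<Rightarrow> 'i set set" where
  "MinMRCP T Its R minsupp minbond = MRCP T Its R minsupp minbond \<inter> MinRP T Its R minsupp"

definition MinMMaxCR :: "'t set \<Rightarrow> 'i set \<Rightarrow> ('t \<times> 'i) set \<Rightarrow> nat \<Rightarrow> real \<Rightarrow> ('i set \<times> nat \<times> ereal) set" where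
  "MinMMaxCR T Its R minsupp minbond =
     (\<lambda>J. (J, supp_conj T R J, bond T R J)) `
       (MaxCRCP T Its R minsupp minbond \<union> MinMRCP T Its R minsupp minbond)"

end

theory Submission
  imports Defs
begin

text \<open>Conjunctive support and bond are both antitone, so the rare correlated patterns
form a convex family: a pattern is in \<open>RCP\<close> as soon as it lies above some element of \<open>RCP\<close>
(bounding its support) and below another (bounding its bond). Every \<open>I \<in> RCP\<close> has such
witnesses in the representation: a maximal correlated superset, which is automatically rare
and closed, and a minimal rare subset, which is automatically correlated and minimal.\<close>

lemma supp_conj_antimono:
  assumes "finite T" "I \<subseteq> J"
  shows "supp_conj T R J \<le> supp_conj T R I"
  unfolding supp_conj_def using assms by (intro card_mono) auto

lemma supp_disj_mono:
  assumes "finite T" "I \<subseteq> J"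
  shows "supp_disj T R I \<le> supp_disj T R J"
  unfolding supp_disj_def using assms by (intro card_mono) auto

lemma supp_conj_le_supp_disj:
  assumes "finite T" "I \<noteq> {}"
  shows "supp_conj T R I \<le> supp_disj T R I"
  unfolding supp_conj_def supp_disj_def using assms by (intro card_mono) auto

lemma bond_antimono:
  assumes "finite T" "I \<subseteq> J"
  shows "bond T R J \<le> bond T R I"
proof (cases "I = {}")
  case True
  then show ?thesis by (simp add: bond_def)
next
  case False
  with assms have "J \<noteq> {}" by auto
  have conj: "supp_conj T R J \<le> supp_conj T R I"
    using supp_conj_antimono[OF assms] .
  have disj: "supp_disj T R I \<le> supp_disj T R J"
    using supp_disj_mono[OF assms] .
  show ?thesis
  proof (cases "supp_disj T R I = 0")
    case True
    \<comment> \<open>\<open>bond T R I = 0 / 0 = 0\<close>, and \<open>bond T R J = 0\<close> because its numerator vanishes\<close>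
    with conj supp_conj_le_supp_disj[OF assms(1) False, of R]
    have "supp_conj T R J = 0" by simp
    with True False \<open>J \<noteq> {}\<close> show ?thesis by (simp add: bond_def)
  next
    case False
    with conj disj
    have "real (supp_conj T R J) / real (supp_disj T R J)
          \<le> real (supp_conj T R I) / real (supp_disj T R I)"
      by (intro frac_le) auto
    with \<open>I \<noteq> {}\<close> \<open>J \<noteq> {}\<close> show ?thesis by (simp add: bond_def)
  qed
qed

lemma bond_less_if_supp_conj_less:
  assumes "finite T" "I \<subseteq> J" "I \<noteq> {}" "supp_conj T R J < supp_conj T R I"
  shows "bond T R J < bond T R I"
proof -
  from assms have "J \<noteq> {}" by auto
  have "supp_conj T R I \<le> supp_disj T R I"
    using supp_conj_le_supp_disj[OF assms(1,3)] .
  with assms(4) supp_disj_mono[OF assms(1,2), of R]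
  have "real (supp_conj T R J) / real (supp_disj T R J)
        < real (supp_conj T R I) / real (supp_disj T R I)"
    by (intro frac_less) auto
  with \<open>I \<noteq> {}\<close> \<open>J \<noteq> {}\<close> show ?thesis by (simp add: bond_def)
qed

lemma RCP_between:
  assumes "finite T" "I \<subseteq> Its"
    and "J \<in> RCP T Its R minsupp minbond" "I \<subseteq> J"
    and "K \<in> RCP T Its R minsupp minbond" "K \<subseteq> I"
  shows "I \<in> RCP T Its R minsupp minbond"
proof -
  have "ereal minbond \<le> bond T R J" using assms(3) by (simp add: RCP_def CP_def)
  also have "\<dots> \<le> bond T R I" using bond_antimono[OF assms(1,4)] .
  finally have "ereal minbond \<le> bond T R I" .
  moreover have "supp_conj T R I \<le> supp_conj T R K"
    using supp_conj_antimono[OF assms(1,6)] .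
  with assms(5) have "supp_conj T R I < minsupp" by (simp add: RCP_def)
  ultimately show ?thesis using assms(2) by (simp add: RCP_def CP_def)
qed

lemma MaxCP_superset_exists:
  assumes "finite Its" "I \<in> CP T Its R minbond"
  obtains J where "J \<in> MaxCP T Its R minbond" "I \<subseteq> J"
proof -
  define A where "A = {J \<in> CP T Its R minbond. I \<subseteq> J}"
  have "A \<subseteq> Pow Its" by (auto simp: A_def CP_def)
  with assms(1) have "finite A" by (simp add: finite_subset)
  moreover have "I \<in> A" using assms(2) by (simp add: A_def)
  ultimately obtain J where "J \<in> A" and maximal: "\<forall>J'\<in>A. J \<subseteq> J' \<longrightarrow> J = J'"
    by (metis finite_has_maximal2)
  have "bond T R J' < ereal minbond" if "J \<subset> J'" "J' \<subseteq> Its" for J'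
  proof (rule ccontr)
    assume "\<not> ?thesis"
    with that \<open>J \<in> A\<close> have "J' \<in> A" by (auto simp: A_def CP_def)
    with maximal that(1) show False by blast
  qed
  with \<open>J \<in> A\<close> have "J \<in> MaxCP T Its R minbond" by (simp add: MaxCP_def A_def)
  with \<open>J \<in> A\<close> show ?thesis using that by (simp add: A_def)
qed

lemma MinRP_subset_exists:
  assumes "finite Its" "I \<subseteq> Its" "supp_conj T R I < minsupp"
  obtains K where "K \<in> MinRP T Its R minsupp" "K \<subseteq> I"
proof -
  define B where "B = {K. K \<subseteq> I \<and> supp_conj T R K < minsupp}"
  have "B \<subseteq> Pow I" by (auto simp: B_def)
  with finite_subset[OF assms(2,1)] have "finite B" by (simp add: finite_subset)
  moreover have "I \<in> B" using assms(3) by (simp add: B_def)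
  ultimately obtain K where "K \<in> B" and minimal: "\<forall>K'\<in>B. K' \<subseteq> K \<longrightarrow> K = K'"
    by (metis finite_has_minimal2)
  have "minsupp \<le> supp_conj T R K'" if "K' \<subset> K" for K'
  proof (rule ccontr)
    assume "\<not> ?thesis"
    with that \<open>K \<in> B\<close> have "K' \<in> B" by (auto simp: B_def)
    with minimal that show False by blast
  qed
  with \<open>K \<in> B\<close> assms(2) have "K \<in> MinRP T Its R minsupp"
    by (auto simp: MinRP_def B_def)
  with \<open>K \<in> B\<close> show ?thesis using that by (simp add: B_def)
qed

lemma MaxCP_RCP_imp_MaxCRCP:
  assumes "J \<in> MaxCP T Its R minbond" "J \<in> RCP T Its R minsupp minbond"
  shows "J \<in> MaxCRCP T Its R minsupp minbond"
proof -
  have "bond T R J' < bond T R J" if "J \<subset> J'" "J' \<subseteq> Its" for J'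
  proof -
    have "bond T R J' < ereal minbond" using assms(1) that by (simp add: MaxCP_def)
    also have "\<dots> \<le> bond T R J" using assms(1) by (simp add: MaxCP_def CP_def)
    finally show ?thesis .
  qed
  with assms show ?thesis by (simp add: MaxCRCP_def CRCP_def)
qed

lemma MinRP_RCP_imp_MinMRCP:
  assumes "finite T" "K \<in> MinRP T Its R minsupp" "K \<in> RCP T Its R minsupp minbond"
  shows "K \<in> MinMRCP T Its R minsupp minbond"
proof -
  have "bond T R K < bond T R I" if "I \<subset> K" for I
  proof (cases "I = {}")
    case True
    with that show ?thesis by (simp add: bond_def)
  next
    case False
    from assms(2) that have "supp_conj T R K < minsupp" "minsupp \<le> supp_conj T R I"
      by (simp_all add: MinRP_def)
    then have "supp_conj T R K < supp_conj T R I" by linarith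
    with assms(1) that False show ?thesis
      by (intro bond_less_if_supp_conj_less) auto
  qed
  with assms(2,3) show ?thesis by (simp add: MinMRCP_def MRCP_def)
qed

lemma MaxCRCP_superset_exists:
  assumes "finite T" "finite Its" "I \<in> RCP T Its R minsupp minbond"
  obtains J where "J \<in> MaxCRCP T Its R minsupp minbond" "I \<subseteq> J"
proof -
  from assms(3) have "I \<in> CP T Its R minbond" "supp_conj T R I < minsupp"
    by (simp_all add: RCP_def)
  obtain J where J: "J \<in> MaxCP T Its R minbond" "I \<subseteq> J"
    using MaxCP_superset_exists[OF assms(2) \<open>I \<in> CP T Its R minbond\<close>] .
  have "supp_conj T R J \<le> supp_conj T R I"
    using supp_conj_antimono[OF assms(1) \<open>I \<subseteq> J\<close>] .
  with J(1) \<open>supp_conj T R I < minsupp\<close> have "J \<in> RCP T Its R minsupp minbond"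
    by (simp add: RCP_def MaxCP_def)
  with J show ?thesis by (blast intro: that MaxCP_RCP_imp_MaxCRCP)
qed

lemma MinMRCP_subset_exists:
  assumes "finite T" "finite Its" "I \<subseteq> Its" "I \<in> RCP T Its R minsupp minbond"
  obtains K where "K \<in> MinMRCP T Its R minsupp minbond" "K \<subseteq> I"
proof -
  from assms(4) have "ereal minbond \<le> bond T R I" "supp_conj T R I < minsupp"
    by (simp_all add: RCP_def CP_def)
  obtain K where K: "K \<in> MinRP T Its R minsupp" "K \<subseteq> I"
    using MinRP_subset_exists[OF assms(2,3) \<open>supp_conj T R I < minsupp\<close>] .
  note \<open>ereal minbond \<le> bond T R I\<close>
  also have "bond T R I \<le> bond T R K"
    using bond_antimono[OF assms(1) \<open>K \<subseteq> I\<close>] .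
  finally have "K \<in> RCP T Its R minsupp minbond"
    using K(1) by (simp add: RCP_def CP_def MinRP_def)
  with K show ?thesis by (blast intro: that MinRP_RCP_imp_MinMRCP[OF assms(1)])
qed

lemma fst_MinMMaxCR:
  "fst ` MinMMaxCR T Its R minsupp minbond
     = MaxCRCP T Its R minsupp minbond \<union> MinMRCP T Its R minsupp minbond"
  unfolding MinMMaxCR_def by (simp add: image_image)

lemma fst_MinMMaxCR_subset_RCP:
  "fst ` MinMMaxCR T Its R minsupp minbond \<subseteq> RCP T Its R minsupp minbond"
  unfolding fst_MinMMaxCR MaxCRCP_def MinMRCP_def CRCP_def MRCP_def by blast

lemma RCP_iff_between_MinMMaxCR:
  assumes "extraction_context T Its R" "I \<subseteq> Its"
  shows "I \<in> RCP T Its R minsupp minbond \<longleftrightarrow>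
    (\<exists>J\<in>fst ` MinMMaxCR T Its R minsupp minbond. I \<subseteq> J) \<and>
    (\<exists>K\<in>fst ` MinMMaxCR T Its R minsupp minbond. K \<subseteq> I)"
proof -
  from assms(1) have "finite T" "finite Its" by (simp_all add: extraction_context_def)
  show ?thesis
  proof
    assume "I \<in> RCP T Its R minsupp minbond"
    obtain J where "J \<in> MaxCRCP T Its R minsupp minbond" "I \<subseteq> J"
      using MaxCRCP_superset_exists[OF \<open>finite T\<close> \<open>finite Its\<close> \<open>I \<in> RCP _ _ _ _ _\<close>] .
    moreover obtain K where "K \<in> MinMRCP T Its R minsupp minbond" "K \<subseteq> I"
      using MinMRCP_subset_exists[OF \<open>finite T\<close> \<open>finite Its\<close> assms(2) \<open>I \<in> RCP _ _ _ _ _\<close>] .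
    ultimately show "(\<exists>J\<in>fst ` MinMMaxCR T Its R minsupp minbond. I \<subseteq> J) \<and>
      (\<exists>K\<in>fst ` MinMMaxCR T Its R minsupp minbond. K \<subseteq> I)"
      unfolding fst_MinMMaxCR by (intro conjI bexI UnI1 UnI2)
  next
    assume "(\<exists>J\<in>fst ` MinMMaxCR T Its R minsupp minbond. I \<subseteq> J) \<and>
      (\<exists>K\<in>fst ` MinMMaxCR T Its R minsupp minbond. K \<subseteq> I)"
    then obtain J K where J: "J \<in> fst ` MinMMaxCR T Its R minsupp minbond" "I \<subseteq> J"
      and K: "K \<in> fst ` MinMMaxCR T Its R minsupp minbond" "K \<subseteq> I"
      by (elim conjE bexE)
    from J(1) K(1) have "J \<in> RCP T Its R minsupp minbond" "K \<in> RCP T Its R minsupp minbond"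
      by (simp_all add: subsetD[OF fst_MinMMaxCR_subset_RCP])
    with J(2) K(2) show "I \<in> RCP T Its R minsupp minbond"
      by (intro RCP_between[OF \<open>finite T\<close> assms(2)])
  qed
qed

theorem mainTheorem8:
  fixes T1 :: "'t set" and R1 :: "('t \<times> 'i) set"
    and T2 :: "'u set" and R2 :: "('u \<times> 'i) set"
    and Its :: "'i set" and minsupp :: nat and minbond :: real
  assumes "extraction_context T1 Its R1"
    and "extraction_context T2 Its R2"
    and "MinMMaxCR T1 Its R1 minsupp minbond = MinMMaxCR T2 Its R2 minsupp minbond"
  shows "\<forall>I. I \<subseteq> Its \<longrightarrow>
           (I \<in> RCP T1 Its R1 minsupp minbond \<longleftrightarrow> I \<in> RCP T2 Its R2 minsupp minbond)"
proof (intro allI impI)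
  fix I assume "I \<subseteq> Its"
  show "I \<in> RCP T1 Its R1 minsupp minbond \<longleftrightarrow> I \<in> RCP T2 Its R2 minsupp minbond"
    unfolding RCP_iff_between_MinMMaxCR[OF assms(1) \<open>I \<subseteq> Its\<close>]
      RCP_iff_between_MinMMaxCR[OF assms(2) \<open>I \<subseteq> Its\<close>] assms(3) ..
qed

end
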